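(* Let $n\ge 2$, let $U\subseteq\mathbb{R}^n$ be an open cone (i.e. $\lambda x\in U$ for all $x\in U$, $\lambda>0$), and let $f$ be a smooth function on $U$ which is homogeneous of degree $d>1$ (i.e. $f(\lambda x)=\lambda^d f(x)$ for all $\lambda>0$), with $f>0$ on $U$ and $\det(\partial^2 f/\partial x_i\partial x_j)\neq 0$ on $U$. Give $U$ the pseudo-Riemannian metric $g_{ij}=-\frac{1}{d(d-1)}\,\partial^2 f/\partial x_i\partial x_j$, and give the hypersurface $M=\{x\in U: f(x)=1\}$ the restricted (nondegenerate) metric. Then the map $\varphi(t,x)=t^{2/d}x$ is an isometry from the warped product $(4/d^2)\big((-1)\mathbb{R}^{>0}\times_t (d^2/4)M\big)$ onto $U$.
   Context: For a pseudo-Riemannian manifold $N$ and a real number $a\neq 0$, $aN$ denotes the same manifold with inner product multiplied by $a$: $\langle v,w\rangle_{aN}=a\langle v,w\rangle_N$. For a pseudo-Riemannian manifold $N$, the warped product $(-1)\mathbb{R}^{>0}\times_t N$ is the manifold $\mathbb{R}^{>0}\times N$ with the metric in which $T(\mathbb{R}^{>0})$ is orthogonal to $TN$ at every point, the inner product on $TN$ at $(t,x)$ is $t^2$ times the given inner product of $N$ at $x$, and $\langle\partial/\partial t,\partial/\partial t\rangle=-1$. *)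

theory Defs
  imports "HOL-Analysis.Analysis"
begin

definition dirderiv :: "('a::real_normed_vector \<Rightarrow> real) \<Rightarrow> 'a \<Rightarrow> 'a \<Rightarrow> real" where
  "dirderiv f v x = deriv (\<lambda>t. f (x + t *\<^sub>R v)) 0"

fun Ck :: "nat \<Rightarrow> 'a::euclidean_space set \<Rightarrow> ('a \<Rightarrow> real) \<Rightarrow> bool" where
  "Ck 0 S f \<longleftrightarrow> continuous_on S f"
| "Ck (Suc k) S f \<longleftrightarrow> continuous_on S f \<and>
     (\<forall>x\<in>S. \<forall>b\<in>Basis. (\<lambda>t. f (x + t *\<^sub>R b)) differentiable (at 0)) \<and>
     (\<forall>b\<in>Basis. Ck k S (dirderiv f b))"

definition smooth_real_on :: "'a::euclidean_space set \<Rightarrow> ('a \<Rightarrow> real) \<Rightarrow> bool" where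
  "smooth_real_on S f \<longleftrightarrow> (\<forall>k. Ck k S f)"

definition smooth_map_on :: "'a::euclidean_space set \<Rightarrow> ('a \<Rightarrow> 'b::euclidean_space) \<Rightarrow> bool" where
  "smooth_map_on S F \<longleftrightarrow> (\<forall>e\<in>Basis. smooth_real_on S (\<lambda>x. F x \<bullet> e))"

definition hess :: "(real^'n \<Rightarrow> real) \<Rightarrow> real^'n \<Rightarrow> 'n \<Rightarrow> 'n \<Rightarrow> real" where
  "hess f x i j = dirderiv (dirderiv f (axis j 1)) (axis i 1) x"

definition hess_metric :: "real \<Rightarrow> (real^'n \<Rightarrow> real) \<Rightarrow> real^'n \<Rightarrow> real^'n \<Rightarrow> real^'n \<Rightarrow> real" where
  "hess_metric d f x v w = - (1 / (d * (d - 1))) * (\<Sum>i\<in>UNIV. \<Sum>j\<in>UNIV. hess f x i j * v$i * w$j)"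

text \<open>Tangent space of the level set {f = 1} at x: kernel of df_x.\<close>
definition level_tangent :: "(real^'n \<Rightarrow> real) \<Rightarrow> real^'n \<Rightarrow> (real^'n) set" where
  "level_tangent f x = {v. (\<Sum>i\<in>UNIV. dirderiv f (axis i 1) x * v$i) = 0}"

end

theory Submission
  imports Defs
begin

text \<open>Differentiating the homogeneity relation f(c x) = c^d f(x) gives Euler's identity
  grad f(x) . x = d f(x); applied to the partial derivatives, which are homogeneous of degree d - 1,
  and differentiated once more, it gives H x = x^T H = (d - 1) grad f(x) for the Hessian H, which
  is itself homogeneous of degree d - 2. So at a point x of M the position vector satisfies
  g(x, x) = -1 and is g-orthogonal to T_x M = ker df_x, so T_x M is the g-orthogonal complement
  of a non-null vector and the restriction of the nondegenerate g to it is nondegenerate. The differential of phi(t, x) = t^(2/d) x maps (a, v) to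
  a (2/d) t^(2/d - 1) x + t^(2/d) v, and evaluating g at t^(2/d) x contributes the factor
  t^(2(d - 2)/d); the two scalings combine to -(4/d^2) a b + t^2 g_x(v, w). The inverse of phi is
  y |-> (f(y)^(1/2), f(y)^(-1/d) y).

  The C^k classes of the definitions only ask for continuous partial derivatives; the Frechet
  derivative needed for the chain rule in Euler's identity comes from the mean value theorem
  along coordinate paths.\<close>

section \<open>Directional derivatives and the classes C^k\<close>

lemma eventually_eq_along_line:
  fixes f g :: "'a::real_normed_vector \<Rightarrow> real"
  assumes "open S" "x \<in> S" "\<And>y. y \<in> S \<Longrightarrow> f y = g y"
  shows "\<forall>\<^sub>F t in nhds 0. f (x + t *\<^sub>R b) = g (x + t *\<^sub>R b)"
proof -
  have "open ((\<lambda>t::real. x + t *\<^sub>R b) -` S)"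
    by (rule continuous_open_vimage) (auto intro!: continuous_intros assms)
  then have "\<forall>\<^sub>F t in nhds 0. t \<in> (\<lambda>t::real. x + t *\<^sub>R b) -` S"
    by (rule eventually_nhds_in_open) (simp add: assms(2))
  then show ?thesis by eventually_elim (simp add: assms(3))
qed

lemma dirderiv_cong:
  fixes f g :: "'a::real_normed_vector \<Rightarrow> real"
  assumes "open S" "x \<in> S" "\<And>y. y \<in> S \<Longrightarrow> f y = g y"
  shows "dirderiv f b x = dirderiv g b x"
proof -
  have "\<forall>\<^sub>F t in nhds 0. f (x + t *\<^sub>R b) = g (x + t *\<^sub>R b)"
    using assms by (rule eventually_eq_along_line)
  then show ?thesis unfolding dirderiv_def by (rule deriv_cong_ev) simp
qed

lemma line_differentiable_cong:
  fixes f g :: "'a::real_normed_vector \<Rightarrow> real"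
  assumes "open S" "x \<in> S" "\<And>y. y \<in> S \<Longrightarrow> f y = g y"
    and "(\<lambda>t. f (x + t *\<^sub>R b)) differentiable (at 0)"
  shows "(\<lambda>t. g (x + t *\<^sub>R b)) differentiable (at 0)"
proof -
  have ev: "\<forall>\<^sub>F t in nhds 0. f (x + t *\<^sub>R b) = g (x + t *\<^sub>R b)"
    using assms(1-3) by (rule eventually_eq_along_line)
  obtain D where "((\<lambda>t. f (x + t *\<^sub>R b)) has_real_derivative D) (at 0)"
    using assms(4) real_differentiable_def by blast
  then have "((\<lambda>t. g (x + t *\<^sub>R b)) has_real_derivative D) (at 0)"
    by (rule DERIV_cong_ev[OF refl ev refl, THEN iffD1])
  then show ?thesis using real_differentiable_def by blast
qed

lemma dirderiv_eqI:
  fixes f :: "'a::real_normed_vector \<Rightarrow> real"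
  shows "((\<lambda>t. f (x + t *\<^sub>R b)) has_real_derivative D) (at 0) \<Longrightarrow> dirderiv f b x = D"
  unfolding dirderiv_def by (rule DERIV_imp_deriv)

lemma has_real_derivative_dirderiv:
  fixes f :: "'a::real_normed_vector \<Rightarrow> real"
  shows "(\<lambda>t. f (x + t *\<^sub>R b)) differentiable (at 0) \<Longrightarrow>
    ((\<lambda>t. f (x + t *\<^sub>R b)) has_real_derivative dirderiv f b x) (at 0)"
  unfolding dirderiv_def using DERIV_deriv_iff_real_differentiable by blast

lemma has_real_derivative_dirderiv_shifted:
  fixes f :: "'a::real_normed_vector \<Rightarrow> real"
  assumes "(\<lambda>t. f ((z + s *\<^sub>R b) + t *\<^sub>R b)) differentiable (at 0)"
  shows "((\<lambda>s. f (z + s *\<^sub>R b)) has_real_derivative dirderiv f b (z + s *\<^sub>R b)) (at s)"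
proof -
  let ?g = "\<lambda>t. f ((z + s *\<^sub>R b) + t *\<^sub>R b)"
  have "(?g has_real_derivative dirderiv f b (z + s *\<^sub>R b)) (at (s + - s))"
    using has_real_derivative_dirderiv[OF assms] by simp
  then have "((\<lambda>u. ?g (u + - s)) has_real_derivative dirderiv f b (z + s *\<^sub>R b)) (at s)"
    by (subst (asm) DERIV_shift)
  moreover have "(\<lambda>u. ?g (u + - s)) = (\<lambda>u. f (z + u *\<^sub>R b))"
    by (rule ext) (simp add: algebra_simps)
  ultimately show ?thesis by simp
qed

lemma Ck_imp_continuous_on: "Ck k S f \<Longrightarrow> continuous_on S f"
  by (cases k) auto

lemma Ck_Suc_imp_Ck: "Ck (Suc k) S f \<Longrightarrow> Ck k S f"
  by (induction k arbitrary: f) auto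

lemma Ck_SucD:
  assumes "Ck (Suc k) S f"
  shows "Ck k S f"
    and "\<And>x b. x \<in> S \<Longrightarrow> b \<in> Basis \<Longrightarrow>
           ((\<lambda>t. f (x + t *\<^sub>R b)) has_real_derivative dirderiv f b x) (at 0)"
    and "\<And>b. b \<in> Basis \<Longrightarrow> Ck k S (dirderiv f b)"
  using assms Ck_Suc_imp_Ck[OF assms] by (auto intro: has_real_derivative_dirderiv)

lemma Ck_cong:
  fixes f g :: "'a::euclidean_space \<Rightarrow> real"
  assumes S: "open S"
  shows "(\<And>y. y \<in> S \<Longrightarrow> f y = g y) \<Longrightarrow> Ck k S f \<Longrightarrow> Ck k S g"
proof (induction k arbitrary: f g)
  case 0
  have "continuous_on S g"
    using 0(2) by (simp add: continuous_on_eq[OF _ 0(1)])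
  then show ?case by simp
next
  case (Suc k)
  have "continuous_on S g"
    using Suc.prems(2) by (simp add: continuous_on_eq[OF _ Suc.prems(1)])
  moreover have "(\<lambda>t. g (x + t *\<^sub>R b)) differentiable (at 0)" if "x \<in> S" "b \<in> Basis" for x b
    using Suc.prems(2) that by (intro line_differentiable_cong[OF S that(1) Suc.prems(1)]) auto
  moreover have "Ck k S (dirderiv g b)" if "b \<in> Basis" for b
  proof (rule Suc.IH[of "dirderiv f b"])
    show "dirderiv f b y = dirderiv g b y" if "y \<in> S" for y
      by (rule dirderiv_cong[OF S that Suc.prems(1)])
    show "Ck k S (dirderiv f b)" using Suc.prems(2) \<open>b \<in> Basis\<close> by simp
  qed
  ultimately show ?case by simp
qed

lemma Ck_SucI:
  fixes f :: "'a::euclidean_space \<Rightarrow> real"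
  assumes S: "open S" and "continuous_on S f"
    and D: "\<And>x b. x \<in> S \<Longrightarrow> b \<in> Basis \<Longrightarrow>
              ((\<lambda>t. f (x + t *\<^sub>R b)) has_real_derivative Df b x) (at 0)"
    and "\<And>b. b \<in> Basis \<Longrightarrow> Ck k S (Df b)"
  shows "Ck (Suc k) S f"
proof -
  have "Ck k S (dirderiv f b)" if b: "b \<in> Basis" for b
  proof (rule Ck_cong[OF S _ assms(4)[OF b]])
    show "Df b y = dirderiv f b y" if "y \<in> S" for y
      by (rule dirderiv_eqI[OF D[OF that b], symmetric])
  qed
  moreover have "(\<lambda>t. f (x + t *\<^sub>R b)) differentiable (at 0)" if "x \<in> S" "b \<in> Basis" for x b
    using D[OF that] real_differentiable_def by blast
  ultimately show ?thesis using assms by simp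
qed

lemma Ck_const:
  fixes S :: "'a::euclidean_space set" and c :: real
  shows "Ck k S (\<lambda>x. c)"
proof (induction k arbitrary: c)
  case (Suc k)
  have "dirderiv (\<lambda>x::'a. c) b = (\<lambda>x. 0)" for b
    by (rule ext, rule dirderiv_eqI) simp
  then show ?case using Suc by simp
qed simp

lemma Ck_bounded_linear:
  fixes L :: "'a::euclidean_space \<Rightarrow> real"
  assumes "bounded_linear L"
  shows "Ck k S L"
proof (cases k)
  case 0
  then show ?thesis using assms by (simp add: linear_continuous_on)
next
  case (Suc m)
  interpret L: bounded_linear L by fact
  have D: "((\<lambda>t. L (x + t *\<^sub>R b)) has_real_derivative L b) (at 0)" for x b
  proof -
    have "(\<lambda>t. L (x + t *\<^sub>R b)) = (\<lambda>t. L x + t * L b)" by (simp add: L.add L.scaleR)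
    then show ?thesis by (auto intro!: derivative_eq_intros)
  qed
  have "dirderiv L b = (\<lambda>x. L b)" for b
    by (rule ext, rule dirderiv_eqI[OF D])
  then show ?thesis using Suc D assms Ck_const
    by (auto simp: linear_continuous_on real_differentiable_def)
qed

lemma Ck_add:
  fixes f g :: "'a::euclidean_space \<Rightarrow> real"
  assumes S: "open S"
  shows "Ck k S f \<Longrightarrow> Ck k S g \<Longrightarrow> Ck k S (\<lambda>x. f x + g x)"
proof (induction k arbitrary: f g)
  case 0
  then show ?case by (auto intro: continuous_on_add)
next
  case (Suc k)
  note F = Ck_SucD[OF Suc.prems(1)] and G = Ck_SucD[OF Suc.prems(2)]
  show ?case
  proof (rule Ck_SucI[OF S, where Df = "\<lambda>b x. dirderiv f b x + dirderiv g b x"])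
    show "continuous_on S (\<lambda>x. f x + g x)"
      using F(1) G(1) by (intro continuous_on_add Ck_imp_continuous_on)
    show "((\<lambda>t. f (x + t *\<^sub>R b) + g (x + t *\<^sub>R b)) has_real_derivative
            dirderiv f b x + dirderiv g b x) (at 0)" if "x \<in> S" "b \<in> Basis" for x b
      by (rule DERIV_add[OF F(2)[OF that] G(2)[OF that]])
    show "Ck k S (\<lambda>x. dirderiv f b x + dirderiv g b x)" if "b \<in> Basis" for b
      by (rule Suc.IH[OF F(3)[OF that] G(3)[OF that]])
  qed
qed

lemma Ck_mult:
  fixes f g :: "'a::euclidean_space \<Rightarrow> real"
  assumes S: "open S"
  shows "Ck k S f \<Longrightarrow> Ck k S g \<Longrightarrow> Ck k S (\<lambda>x. f x * g x)"
proof (induction k arbitrary: f g)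
  case 0
  then show ?case by (auto intro: continuous_on_mult)
next
  case (Suc k)
  note F = Ck_SucD[OF Suc.prems(1)] and G = Ck_SucD[OF Suc.prems(2)]
  show ?case
  proof (rule Ck_SucI[OF S, where Df = "\<lambda>b x. dirderiv f b x * g x + f x * dirderiv g b x"])
    show "continuous_on S (\<lambda>x. f x * g x)"
      using F(1) G(1) by (intro continuous_on_mult Ck_imp_continuous_on)
    show "((\<lambda>t. f (x + t *\<^sub>R b) * g (x + t *\<^sub>R b)) has_real_derivative
            dirderiv f b x * g x + f x * dirderiv g b x) (at 0)" if "x \<in> S" "b \<in> Basis" for x b
      using DERIV_mult[OF F(2)[OF that] G(2)[OF that]] by (simp add: mult.commute)
    show "Ck k S (\<lambda>x. dirderiv f b x * g x + f x * dirderiv g b x)" if "b \<in> Basis" for b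
      using that by (intro Ck_add[OF S] Suc.IH F G)
  qed
qed

lemma Ck_powr:
  fixes f :: "'a::euclidean_space \<Rightarrow> real"
  assumes S: "open S"
  shows "Ck k S f \<Longrightarrow> (\<And>x. x \<in> S \<Longrightarrow> f x > 0) \<Longrightarrow> Ck k S (\<lambda>x. f x powr a)"
proof (induction k arbitrary: a)
  case 0
  have "\<forall>x\<in>S. f x \<noteq> 0" using 0 by fastforce
  with 0 show ?case by (auto intro!: continuous_intros)
next
  case (Suc k)
  note F = Ck_SucD[OF Suc.prems(1)]
  show ?case
  proof (rule Ck_SucI[OF S, where Df = "\<lambda>b x. a * f x powr (a - 1) * dirderiv f b x"])
    show "continuous_on S (\<lambda>x. f x powr a)"
    proof -
      have "\<forall>x\<in>S. f x \<noteq> 0" using Suc.prems(2) by fastforce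
      then show ?thesis using Ck_imp_continuous_on[OF Suc.prems(1)] by (auto intro!: continuous_intros)
    qed
    show "((\<lambda>t. f (x + t *\<^sub>R b) powr a) has_real_derivative
            a * f x powr (a - 1) * dirderiv f b x) (at 0)" if "x \<in> S" "b \<in> Basis" for x b
      using DERIV_fun_powr[OF F(2)[OF that], of a] Suc.prems(2)[OF that(1)] by simp
    show "Ck k S (\<lambda>x. a * f x powr (a - 1) * dirderiv f b x)" if "b \<in> Basis" for b
    proof -
      have "Ck k S (\<lambda>x. f x powr (a - 1))"
        using Suc.prems(2) by (rule Suc.IH[OF F(1)])
      then have "Ck k S (\<lambda>x. a * f x powr (a - 1))"
        by (rule Ck_mult[OF S Ck_const])
      then show ?thesis by (rule Ck_mult[OF S _ F(3)[OF that]])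
    qed
  qed
qed

lemma smooth_real_on_mult:
  "open S \<Longrightarrow> smooth_real_on S f \<Longrightarrow> smooth_real_on S g \<Longrightarrow> smooth_real_on S (\<lambda>x. f x * g x)"
  by (simp add: smooth_real_on_def Ck_mult)

lemma smooth_real_on_powr:
  "open S \<Longrightarrow> smooth_real_on S f \<Longrightarrow> (\<And>x. x \<in> S \<Longrightarrow> f x > 0) \<Longrightarrow>
    smooth_real_on S (\<lambda>x. f x powr a)"
  by (simp add: smooth_real_on_def Ck_powr)

lemma smooth_real_on_bounded_linear: "bounded_linear L \<Longrightarrow> smooth_real_on S L"
  by (simp add: smooth_real_on_def Ck_bounded_linear)

lemma smooth_map_on_vec_iff:
  fixes G :: "'a::euclidean_space \<Rightarrow> real^'n"
  shows "smooth_map_on S G \<longleftrightarrow> (\<forall>i. smooth_real_on S (\<lambda>x. G x $ i))"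
  by (auto simp: smooth_map_on_def Basis_vec_def inner_axis)

lemma smooth_map_on_prod_iff:
  fixes G :: "'a::euclidean_space \<Rightarrow> real \<times> 'b::euclidean_space"
  shows "smooth_map_on S G \<longleftrightarrow> smooth_real_on S (\<lambda>x. fst (G x)) \<and> smooth_map_on S (\<lambda>x. snd (G x))"
  by (auto simp: smooth_map_on_def Basis_prod_def inner_prod_def)

section \<open>Gradient, Hessian and the Frechet derivative\<close>

definition grad :: "(real^'n \<Rightarrow> real) \<Rightarrow> real^'n \<Rightarrow> real^'n" where
  "grad F x = (\<chi> i. dirderiv F (axis i 1) x)"

definition hess_matrix :: "(real^'n \<Rightarrow> real) \<Rightarrow> real^'n \<Rightarrow> real^'n^'n" where
  "hess_matrix F x = (\<chi> i j. hess F x i j)"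

lemma level_tangent_iff: "v \<in> level_tangent F x \<longleftrightarrow> grad F x \<bullet> v = 0"
  by (simp add: level_tangent_def grad_def inner_vec_def)

lemma hess_metric_eq_inner:
  "hess_metric d F x v w = - (1 / (d * (d - 1))) * (v \<bullet> (hess_matrix F x *v w))"
  by (simp add: hess_metric_def hess_matrix_def inner_vec_def matrix_vector_mult_def
      sum_distrib_left mult_ac)

lemma mean_value_symmetric:
  fixes g g' :: "real \<Rightarrow> real"
  assumes "\<And>s. \<bar>s\<bar> \<le> \<bar>h\<bar> \<Longrightarrow> DERIV g s :> g' s"
  shows "\<exists>\<xi>. \<bar>\<xi>\<bar> \<le> \<bar>h\<bar> \<and> g h - g 0 = h * g' \<xi>"
proof (cases "h = 0")
  case True
  then show ?thesis by auto
next
  case False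
  show ?thesis
  proof (cases "h > 0")
    case True
    from MVT2[OF True, of g g'] assms obtain z where "0 < z" "z < h" "g h - g 0 = (h - 0) * g' z"
      by force
    then show ?thesis by (intro exI[of _ z]) auto
  next
    case False
    with \<open>h \<noteq> 0\<close> have "h < 0" by simp
    from MVT2[OF this, of g g'] assms obtain z where "h < z" "z < 0" "g 0 - g h = (0 - h) * g' z"
      by force
    then show ?thesis by (intro exI[of _ z]) (auto simp: algebra_simps)
  qed
qed

definition coord_restrict :: "'n set \<Rightarrow> real^'n \<Rightarrow> real^'n" where
  "coord_restrict S h = (\<chi> j. if j \<in> S then h$j else 0)"

text \<open>Changing the coordinates in S one at a time and applying the mean value theorem
  on each coordinate segment.\<close>
lemma coord_restrict_increment_bound:
  fixes F :: "real^'n \<Rightarrow> real"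
  assumes line_diff: "\<And>y i. y \<in> U \<Longrightarrow> (\<lambda>t. F (y + t *\<^sub>R axis i 1)) differentiable (at 0)"
    and ball: "ball x \<delta> \<subseteq> U"
    and close: "\<And>i y. y \<in> ball x \<delta> \<Longrightarrow> \<bar>dirderiv F (axis i 1) y - dirderiv F (axis i 1) x\<bar> \<le> \<epsilon>"
    and h: "norm h < \<delta>" and "finite S"
  shows "\<bar>F (x + coord_restrict S h) - F x - (\<Sum>i\<in>S. dirderiv F (axis i 1) x * h$i)\<bar>
           \<le> real (card S) * \<epsilon> * norm h"
  using \<open>finite S\<close>
proof (induction S rule: finite_induct)
  case empty
  have "coord_restrict {} h = 0" by (simp add: coord_restrict_def vec_eq_iff)
  then show ?case by simp
next
  case (insert i S)
  let ?e = "axis i (1::real)"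
  define z where "z = x + coord_restrict S h"
  define G where "G = (\<lambda>s. F (z + s *\<^sub>R ?e))"
  have restrict_insert: "coord_restrict (insert i S) h = coord_restrict S h + h$i *\<^sub>R ?e"
    using insert.hyps by (auto simp: coord_restrict_def vec_eq_iff axis_def)
  have in_ball: "z + s *\<^sub>R ?e \<in> ball x \<delta>" if "\<bar>s\<bar> \<le> \<bar>h$i\<bar>" for s
  proof -
    have "norm (coord_restrict S h + s *\<^sub>R ?e) \<le> norm h"
      using insert.hyps that
      by (intro norm_le_componentwise_cart) (auto simp: coord_restrict_def axis_def)
    then have "norm (- (coord_restrict S h + s *\<^sub>R ?e)) < \<delta>"
      unfolding norm_minus_cancel using h by linarith
    then show ?thesis by (simp add: z_def dist_norm)
  qed
  have "\<exists>\<xi>. \<bar>\<xi>\<bar> \<le> \<bar>h$i\<bar> \<and> G (h$i) - G 0 = h$i * dirderiv F ?e (z + \<xi> *\<^sub>R ?e)"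
    unfolding G_def
  proof (rule mean_value_symmetric)
    fix s :: real
    assume "\<bar>s\<bar> \<le> \<bar>h$i\<bar>"
    then have "z + s *\<^sub>R ?e \<in> U" using in_ball ball by blast
    then show "DERIV (\<lambda>s. F (z + s *\<^sub>R ?e)) s :> dirderiv F ?e (z + s *\<^sub>R ?e)"
      by (intro has_real_derivative_dirderiv_shifted line_diff)
  qed
  then obtain \<xi> where \<xi>: "\<bar>\<xi>\<bar> \<le> \<bar>h$i\<bar>" "G (h$i) - G 0 = h$i * dirderiv F ?e (z + \<xi> *\<^sub>R ?e)"
    by blast
  have "\<bar>G (h$i) - G 0 - dirderiv F ?e x * h$i\<bar>
      = \<bar>h$i\<bar> * \<bar>dirderiv F ?e (z + \<xi> *\<^sub>R ?e) - dirderiv F ?e x\<bar>"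
    using \<xi> by (simp add: algebra_simps abs_mult[symmetric])
  also have "\<dots> \<le> norm h * \<epsilon>"
    using close[OF in_ball[OF \<xi>(1)], of i] component_le_norm_cart[of h i]
    by (intro mult_mono) auto
  finally have step: "\<bar>G (h$i) - G 0 - dirderiv F ?e x * h$i\<bar> \<le> norm h * \<epsilon>" .
  have "G 0 = F (x + coord_restrict S h)" "G (h$i) = F (x + coord_restrict (insert i S) h)"
    by (simp_all add: G_def z_def restrict_insert add.assoc)
  then have "\<bar>F (x + coord_restrict (insert i S) h) - F x - (\<Sum>j\<in>insert i S. dirderiv F (axis j 1) x * h$j)\<bar>
      = \<bar>(G (h$i) - G 0 - dirderiv F ?e x * h$i)
          + (F (x + coord_restrict S h) - F x - (\<Sum>j\<in>S. dirderiv F (axis j 1) x * h$j))\<bar>"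
    using insert.hyps by simp
  also have "\<dots> \<le> norm h * \<epsilon> + real (card S) * \<epsilon> * norm h"
    using step insert.IH by linarith
  also have "\<dots> = real (card (insert i S)) * \<epsilon> * norm h"
    using insert.hyps by (simp add: algebra_simps)
  finally show ?case .
qed

lemma Ck_Suc_partials_close_on_ball:
  fixes F :: "real^'n \<Rightarrow> real"
  assumes "open U" and C: "Ck (Suc k) U F" and x: "x \<in> U" and "\<epsilon> > 0"
  obtains \<delta> where "\<delta> > 0" "ball x \<delta> \<subseteq> U"
    "\<And>i y. y \<in> ball x \<delta> \<Longrightarrow> \<bar>dirderiv F (axis i 1) y - dirderiv F (axis i 1) x\<bar> \<le> \<epsilon>"
proof -
  have "isCont (dirderiv F (axis i 1)) x" for i
  proof -
    have "Ck k U (dirderiv F (axis i 1))" using C by simp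
    then show ?thesis
      using \<open>open U\<close> x by (auto dest: Ck_imp_continuous_on simp: continuous_on_eq_continuous_at)
  qed
  then have "\<forall>\<^sub>F y in at x. \<forall>i. dist (dirderiv F (axis i 1) y) (dirderiv F (axis i 1) x) < \<epsilon>"
    using \<open>\<epsilon> > 0\<close> by (intro eventually_all_finite) (simp add: isCont_def tendstoD)
  then obtain d2 where "d2 > 0" and d2: "\<And>y i. y \<noteq> x \<Longrightarrow> dist y x < d2 \<Longrightarrow>
      \<bar>dirderiv F (axis i 1) y - dirderiv F (axis i 1) x\<bar> < \<epsilon>"
    unfolding eventually_at dist_real_def by blast
  obtain d1 where "d1 > 0" "ball x d1 \<subseteq> U"
    using \<open>open U\<close> x open_contains_ball by blast
  show ?thesis
  proof
    show "min d1 d2 > 0" "ball x (min d1 d2) \<subseteq> U"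
      using \<open>d1 > 0\<close> \<open>d2 > 0\<close> \<open>ball x d1 \<subseteq> U\<close> by auto
    show "\<bar>dirderiv F (axis i 1) y - dirderiv F (axis i 1) x\<bar> \<le> \<epsilon>" if "y \<in> ball x (min d1 d2)" for i y
      using that d2[of y i] \<open>\<epsilon> > 0\<close> by (cases "y = x") (auto simp: dist_commute)
  qed
qed

lemma Ck_Suc_has_derivative_grad:
  fixes F :: "real^'n \<Rightarrow> real"
  assumes "open U" and C: "Ck (Suc k) U F" and x: "x \<in> U"
  shows "(F has_derivative (\<lambda>h. grad F x \<bullet> h)) (at x)"
  unfolding has_derivative_at_alt
proof (intro conjI allI impI)
  show "bounded_linear (\<lambda>h. grad F x \<bullet> h)"
    by (rule bounded_linear_inner_right)
next
  fix e :: real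
  assume "e > 0"
  define \<epsilon> where "\<epsilon> = e / real CARD('n)"
  have "\<epsilon> > 0" using \<open>e > 0\<close> by (simp add: \<epsilon>_def)
  then obtain \<delta> where "\<delta> > 0" and ball: "ball x \<delta> \<subseteq> U"
    and close: "\<And>i y. y \<in> ball x \<delta> \<Longrightarrow> \<bar>dirderiv F (axis i 1) y - dirderiv F (axis i 1) x\<bar> \<le> \<epsilon>"
    using Ck_Suc_partials_close_on_ball[OF assms] by blast
  have line_diff: "\<And>y i. y \<in> U \<Longrightarrow> (\<lambda>t. F (y + t *\<^sub>R axis i 1)) differentiable (at 0)"
    using C by simp
  show "\<exists>d>0. \<forall>y. norm (y - x) < d \<longrightarrow>
          norm (F y - F x - grad F x \<bullet> (y - x)) \<le> e * norm (y - x)"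
  proof (intro exI[of _ \<delta>] conjI allI impI)
    fix y
    assume y: "norm (y - x) < \<delta>"
    have "\<bar>F (x + coord_restrict UNIV (y - x)) - F x - (\<Sum>i\<in>UNIV. dirderiv F (axis i 1) x * (y - x)$i)\<bar>
          \<le> real CARD('n) * \<epsilon> * norm (y - x)"
      by (rule coord_restrict_increment_bound[OF line_diff ball close y]) auto
    moreover have "coord_restrict UNIV (y - x) = y - x"
      by (simp add: coord_restrict_def vec_eq_iff)
    ultimately show "norm (F y - F x - grad F x \<bullet> (y - x)) \<le> e * norm (y - x)"
      by (simp add: \<epsilon>_def grad_def inner_vec_def)
  qed (rule \<open>\<delta> > 0\<close>)
qed

lemma has_real_derivative_grad_inner_along_axis:
  fixes F :: "real^'n \<Rightarrow> real"
  assumes C: "Ck (Suc (Suc k)) U F" and y: "y \<in> U"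
  shows "((\<lambda>t. grad F (y + t *\<^sub>R axis i 1) \<bullet> (y + t *\<^sub>R axis i 1)) has_real_derivative
           (hess_matrix F y *v y) $ i + dirderiv F (axis i 1) y) (at 0)"
proof -
  let ?e = "axis i (1::real)"
  let ?line = "\<lambda>t. y + t *\<^sub>R ?e"
  have "((\<lambda>t. dirderiv F (axis j 1) (?line t) * ?line t $ j) has_real_derivative
          hess F y i j * y $ j + dirderiv F (axis j 1) y * ?e $ j) (at 0)" for j
  proof -
    have Cj: "Ck (Suc k) U (dirderiv F (axis j 1))"
      using Ck_SucD(3)[OF C] by simp
    have "((\<lambda>t. dirderiv F (axis j 1) (?line t)) has_real_derivative hess F y i j) (at 0)"
      using Ck_SucD(2)[OF Cj y, where b = ?e] by (simp add: hess_def)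
    moreover have "((\<lambda>t. ?line t $ j) has_real_derivative ?e $ j) (at 0)"
      by (auto intro!: derivative_eq_intros)
    ultimately show ?thesis
      by (rule DERIV_mult[THEN DERIV_cong]) (simp add: mult.commute)
  qed
  then have "((\<lambda>t. grad F (?line t) \<bullet> ?line t) has_real_derivative
               (\<Sum>j\<in>UNIV. hess F y i j * y $ j + dirderiv F (axis j 1) y * ?e $ j)) (at 0)"
    unfolding grad_def inner_vec_def by (intro DERIV_sum) simp
  also have "(\<Sum>j\<in>UNIV. hess F y i j * y $ j + dirderiv F (axis j 1) y * ?e $ j)
      = (hess_matrix F y *v y) $ i + grad F y \<bullet> ?e"
    by (simp add: sum.distrib matrix_vector_mult_def hess_matrix_def grad_def inner_vec_def)
  also have "grad F y \<bullet> ?e = dirderiv F ?e y"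
    by (simp add: inner_axis grad_def)
  finally show ?thesis .
qed

lemma nondegenerate_on_hyperplane:
  fixes H :: "real^'n^'n"
  assumes "det H \<noteq> 0" and Hx: "H *v x = c *\<^sub>R g" and "g \<bullet> x \<noteq> 0" and "g \<bullet> v = 0"
    and orth: "\<And>w. g \<bullet> w = 0 \<Longrightarrow> v \<bullet> (H *v w) = 0"
  shows "v = 0"
proof -
  have "(v v* H) \<bullet> u = 0" for u
  proof -
    define w where "w = u - ((g \<bullet> u) / (g \<bullet> x)) *\<^sub>R x"
    have "g \<bullet> w = 0" using \<open>g \<bullet> x \<noteq> 0\<close> by (simp add: w_def inner_diff_right)
    then have "v \<bullet> (H *v w) = 0" by (rule orth)
    moreover have "v \<bullet> (H *v x) = 0" using Hx \<open>g \<bullet> v = 0\<close> by (simp add: inner_commute)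
    ultimately show ?thesis
      by (simp add: dot_lmul_matrix w_def matrix_vector_mult_diff_distrib matrix_vector_mult_scaleR
          inner_diff_right)
  qed
  from this[of "v v* H"] have "transpose H *v v = 0"
    by simp
  moreover obtain B where "B ** transpose H = mat 1"
    using \<open>det H \<noteq> 0\<close> invertible_det_nz invertible_left_inverse by (metis det_transpose)
  ultimately show "v = 0"
    using matrix_left_invertible_ker by blast
qed

section \<open>The warping map\<close>

lemma has_derivative_warp:
  fixes x :: "'a::real_normed_vector"
  assumes "t > 0"
  shows "((\<lambda>p::real \<times> 'a. fst p powr r *\<^sub>R snd p) has_derivative
           (\<lambda>q. (fst q * (r * t powr (r - 1))) *\<^sub>R x + t powr r *\<^sub>R snd q)) (at (t, x))"
proof -
  have "((\<lambda>s. s powr r) has_real_derivative r * t powr (r - 1)) (at t)"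
    using assms by (rule has_real_derivative_powr)
  then have "((\<lambda>s. s powr r) has_derivative (\<lambda>h. h * (r * t powr (r - 1)))) (at (fst (t, x)))"
    by (simp add: has_field_derivative_def mult_commute_abs)
  from diff_chain_at[OF has_derivative_fst[OF has_derivative_ident] this]
  have "((\<lambda>p::real \<times> 'a. fst p powr r) has_derivative (\<lambda>q. fst q * (r * t powr (r - 1)))) (at (t, x))"
    by (simp add: o_def)
  from has_derivative_scaleR[OF this has_derivative_snd[OF has_derivative_ident]]
  show ?thesis by (simp add: add.commute)
qed

lemma warp_powr_identities:
  fixes t d :: real
  assumes "t > 0" and "d \<noteq> 0"
  shows "(t powr (2/d)) powr (d - 2) * (2/d * t powr (2/d - 1))\<^sup>2 = 4 / d\<^sup>2"
    and "(t powr (2/d)) powr (d - 2) * (t powr (2/d))\<^sup>2 = t\<^sup>2"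
proof -
  have "(t powr (2/d)) powr (d - 2) * (t powr (2/d - 1))\<^sup>2
      = t powr (2/d * (d - 2)) * (t powr (2/d - 1) * t powr (2/d - 1))"
    by (simp add: power2_eq_square powr_powr)
  also have "\<dots> = t powr (2/d * (d - 2) + ((2/d - 1) + (2/d - 1)))"
    by (simp only: powr_add)
  also have "2/d * (d - 2) + ((2/d - 1) + (2/d - 1)) = 0"
    using \<open>d \<noteq> 0\<close> by (simp add: field_simps)
  finally show "(t powr (2/d)) powr (d - 2) * (2/d * t powr (2/d - 1))\<^sup>2 = 4 / d\<^sup>2"
    using \<open>t > 0\<close> by (simp add: power_mult_distrib power_divide)
  have "(t powr (2/d)) powr (d - 2) * (t powr (2/d))\<^sup>2
      = t powr (2/d * (d - 2)) * (t powr (2/d) * t powr (2/d))"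
    by (simp add: power2_eq_square powr_powr)
  also have "\<dots> = t powr (2/d * (d - 2) + (2/d + 2/d))"
    by (simp only: powr_add)
  also have "2/d * (d - 2) + (2/d + 2/d) = 2"
    using \<open>d \<noteq> 0\<close> by (simp add: field_simps)
  finally show "(t powr (2/d)) powr (d - 2) * (t powr (2/d))\<^sup>2 = t\<^sup>2"
    using \<open>t > 0\<close> by (simp add: powr_numeral)
qed

lemma smooth_map_on_warp:
  "smooth_map_on ({0<..} \<times> UNIV) (\<lambda>p::real \<times> (real^'n). fst p powr r *\<^sub>R snd p)"
  unfolding smooth_map_on_vec_iff
proof
  fix i :: 'n
  have "open ({0::real<..} \<times> (UNIV :: (real^'n) set))"
    by (intro open_Times) auto
  moreover have "bounded_linear (\<lambda>p::real \<times> (real^'n). snd p $ i)"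
    by (rule bounded_linear_compose[OF bounded_linear_vec_nth bounded_linear_snd])
  ultimately have "smooth_real_on ({0<..} \<times> UNIV) (\<lambda>p::real \<times> (real^'n). fst p powr r * snd p $ i)"
    by (intro smooth_real_on_mult smooth_real_on_powr smooth_real_on_bounded_linear
        bounded_linear_fst) auto
  then show "smooth_real_on ({0<..} \<times> UNIV) (\<lambda>p::real \<times> (real^'n). (fst p powr r *\<^sub>R snd p) $ i)"
    by simp
qed

definition level_polar :: "('a::real_vector \<Rightarrow> real) \<Rightarrow> real \<Rightarrow> 'a \<Rightarrow> real \<times> 'a" where
  "level_polar F e y = (F y powr (1/2), F y powr (-1/e) *\<^sub>R y)"

lemma warp_level_polar:
  assumes "F y > 0"
  shows "fst (level_polar F e y) powr (2/e) *\<^sub>R snd (level_polar F e y) = y"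
proof -
  have "(F y powr (1/2)) powr (2/e) * F y powr (-1/e) = F y powr (1/2 * (2/e) + -1/e)"
    by (simp only: powr_powr powr_add)
  also have "\<dots> = 1"
    using assms by simp
  finally have "(F y powr (1/2)) powr (2/e) * F y powr (-1/e) = 1" .
  then show ?thesis
    by (simp only: level_polar_def fst_conv snd_conv scaleR_scaleR scaleR_one)
qed

lemma smooth_map_on_level_polar:
  fixes F :: "real^'n \<Rightarrow> real"
  assumes "open U" "smooth_real_on U F" "\<And>y. y \<in> U \<Longrightarrow> F y > 0"
  shows "smooth_map_on U (level_polar F e)"
  unfolding smooth_map_on_prod_iff smooth_map_on_vec_iff level_polar_def
proof (intro conjI allI)
  show "smooth_real_on U (\<lambda>y. fst (F y powr (1/2), F y powr (-1/e) *\<^sub>R y))"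
    using smooth_real_on_powr[OF assms] by simp
  have "smooth_real_on U (\<lambda>y. F y powr (-1/e) * y $ i)" for i
    by (rule smooth_real_on_mult[OF \<open>open U\<close> smooth_real_on_powr[OF assms]
          smooth_real_on_bounded_linear[OF bounded_linear_vec_nth]])
  then show "smooth_real_on U (\<lambda>y. snd (F y powr (1/2), F y powr (-1/e) *\<^sub>R y) $ i)" for i
    by simp
qed

section \<open>Homogeneous functions on open cones\<close>

locale homogeneous_on_cone =
  fixes U :: "(real^'n) set" and F :: "real^'n \<Rightarrow> real" and e :: real
  assumes open_U: "open U"
    and cone_U: "\<And>x c. x \<in> U \<Longrightarrow> c > 0 \<Longrightarrow> c *\<^sub>R x \<in> U"
    and homogeneous: "\<And>x c. x \<in> U \<Longrightarrow> c > 0 \<Longrightarrow> F (c *\<^sub>R x) = c powr e * F x"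
begin

lemma euler_identity:
  assumes "Ck (Suc k) U F" and x: "x \<in> U"
  shows "grad F x \<bullet> x = e * F x"
proof -
  let ?L = "\<lambda>h. grad F x \<bullet> h"
  have "((\<lambda>c::real. c *\<^sub>R x) has_derivative (\<lambda>c. c *\<^sub>R x)) (at 1)"
    by (auto intro!: derivative_eq_intros)
  then have "((F \<circ> (\<lambda>c. c *\<^sub>R x)) has_derivative (?L \<circ> (\<lambda>c. c *\<^sub>R x))) (at 1)"
    by (rule diff_chain_at) (simp add: Ck_Suc_has_derivative_grad[OF open_U assms])
  then have radial: "((\<lambda>c. F (c *\<^sub>R x)) has_real_derivative ?L x) (at 1)"
    by (simp add: has_field_derivative_def o_def mult_commute_abs)
  have "((\<lambda>c. c powr e * F x) has_real_derivative e * F x) (at 1)"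
    by (auto intro!: derivative_eq_intros)
  then have "((\<lambda>c. F (c *\<^sub>R x)) has_real_derivative e * F x) (at 1)"
    by (rule has_field_derivative_transform_within_open[of _ _ _ "{0<..}"]) (auto simp: homogeneous x)
  with radial show ?thesis by (rule DERIV_unique)
qed

lemma dirderiv_homogeneous:
  assumes C: "Ck (Suc k) U F" and b: "b \<in> Basis"
  shows "homogeneous_on_cone U (dirderiv F b) (e - 1)"
proof
  fix x and c :: real
  assume x: "x \<in> U" and c: "c > 0"
  define T where "T = (\<lambda>t. x + (t / c) *\<^sub>R b) -` U"
  have "DERIV (\<lambda>t. F (x + t *\<^sub>R b)) (0 / c) :> dirderiv F b x"
    using Ck_SucD(2)[OF C x b] by simp
  from DERIV_chain2[OF this DERIV_cdivide[OF DERIV_ident, of c]]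
  have "DERIV (\<lambda>t. F (x + (t / c) *\<^sub>R b)) 0 :> dirderiv F b x * (1 / c)"
    by simp
  then have "DERIV (\<lambda>t. c powr e * F (x + (t / c) *\<^sub>R b)) 0 :> c powr e * (dirderiv F b x * (1 / c))"
    by (rule DERIV_cmult)
  moreover have "open T"
    unfolding T_def using c by (intro continuous_open_vimage[OF open_U]) (auto intro!: continuous_intros)
  moreover have "0 \<in> T" using x by (simp add: T_def)
  moreover have "c powr e * F (x + (t / c) *\<^sub>R b) = F (c *\<^sub>R x + t *\<^sub>R b)" if "t \<in> T" for t
  proof -
    have "F (c *\<^sub>R (x + (t / c) *\<^sub>R b)) = c powr e * F (x + (t / c) *\<^sub>R b)"
      using that c by (intro homogeneous) (simp add: T_def)
    then show ?thesis using c by (simp add: scaleR_add_right)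
  qed
  ultimately have "DERIV (\<lambda>t. F (c *\<^sub>R x + t *\<^sub>R b)) 0 :> c powr e * (dirderiv F b x * (1 / c))"
    by (rule has_field_derivative_transform_within_open)
  then have "dirderiv F b (c *\<^sub>R x) = c powr e * (dirderiv F b x * (1 / c))"
    by (rule dirderiv_eqI)
  also have "\<dots> = c powr (e - 1) * dirderiv F b x"
    using c by (simp add: powr_diff)
  finally show "dirderiv F b (c *\<^sub>R x) = c powr (e - 1) * dirderiv F b x" .
qed (use open_U cone_U in auto)

lemma hess_matrix_homogeneous:
  assumes C: "Ck (Suc (Suc k)) U F" and x: "x \<in> U" and c: "c > 0"
  shows "hess_matrix F (c *\<^sub>R x) = c powr (e - 2) *\<^sub>R hess_matrix F x"
proof -
  have "homogeneous_on_cone U (dirderiv (dirderiv F (axis j 1)) (axis i 1)) (e - 1 - 1)" for i j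
    using Ck_SucD(3)[OF C, of "axis j 1"]
    by (intro homogeneous_on_cone.dirderiv_homogeneous[OF dirderiv_homogeneous[OF C]]) auto
  then show ?thesis
    using homogeneous_on_cone.homogeneous[OF _ x c] by (simp add: hess_matrix_def hess_def vec_eq_iff)
qed

lemma position_mult_hess_matrix:
  assumes C: "Ck (Suc (Suc k)) U F" and x: "x \<in> U"
  shows "x v* hess_matrix F x = (e - 1) *\<^sub>R grad F x"
  unfolding vec_eq_iff
proof
  fix j :: 'n
  have "homogeneous_on_cone U (dirderiv F (axis j 1)) (e - 1)"
    by (rule dirderiv_homogeneous[OF C]) simp
  moreover have "Ck (Suc k) U (dirderiv F (axis j 1))"
    using Ck_SucD(3)[OF C, of "axis j 1"] by simp
  ultimately have "grad (dirderiv F (axis j 1)) x \<bullet> x = (e - 1) * dirderiv F (axis j 1) x"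
    using x by (rule homogeneous_on_cone.euler_identity)
  then show "(x v* hess_matrix F x) $ j = ((e - 1) *\<^sub>R grad F x) $ j"
    by (simp add: vector_matrix_mult_def hess_matrix_def hess_def grad_def inner_vec_def mult.commute)
qed

text \<open>The Hessian is not known to be symmetric, so this contraction does not follow from
  position_mult_hess_matrix; it comes from differentiating Euler's identity along a coordinate line.\<close>
lemma hess_matrix_mult_position:
  assumes C: "Ck (Suc (Suc k)) U F" and y: "y \<in> U"
  shows "hess_matrix F y *v y = (e - 1) *\<^sub>R grad F y"
  unfolding vec_eq_iff
proof
  fix i :: 'n
  let ?e = "axis i (1::real)"
  let ?line = "\<lambda>t. y + t *\<^sub>R ?e"
  have C1: "Ck (Suc k) U F" using C by (rule Ck_SucD(1))
  have "((\<lambda>t. grad F (?line t) \<bullet> ?line t) has_real_derivative e * dirderiv F ?e y) (at 0)"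
  proof (rule has_field_derivative_transform_within_open)
    show "((\<lambda>t. e * F (?line t)) has_real_derivative e * dirderiv F ?e y) (at 0)"
      using Ck_SucD(2)[OF C1 y] by (auto intro: DERIV_cmult)
    show "open (?line -` U)"
      by (intro continuous_open_vimage[OF open_U]) (auto intro!: continuous_intros)
    show "e * F (?line t) = grad F (?line t) \<bullet> ?line t" if "t \<in> ?line -` U" for t
      using euler_identity[OF C1] that by simp
  qed (use y in simp)
  with has_real_derivative_grad_inner_along_axis[OF C y]
  have "(hess_matrix F y *v y) $ i + dirderiv F ?e y = e * dirderiv F ?e y"
    by (rule DERIV_unique)
  then show "(hess_matrix F y *v y) $ i = ((e - 1) *\<^sub>R grad F y) $ i"
    by (simp add: grad_def algebra_simps)
qed

lemma hess_form_radial_split: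
  assumes C: "Ck (Suc (Suc k)) U F" and x: "x \<in> U" and "c > 0"
    and v: "grad F x \<bullet> v = 0" and w: "grad F x \<bullet> w = 0"
  shows "(\<alpha> *\<^sub>R x + \<beta> *\<^sub>R v) \<bullet> (hess_matrix F (c *\<^sub>R x) *v (\<gamma> *\<^sub>R x + \<delta> *\<^sub>R w))
       = c powr (e - 2) * (\<alpha> * \<gamma> * (e * (e - 1) * F x) + \<beta> * \<delta> * (v \<bullet> (hess_matrix F x *v w)))"
proof -
  let ?H = "hess_matrix F x"
  have "x \<bullet> (?H *v x) = e * (e - 1) * F x"
    using hess_matrix_mult_position[OF C x] euler_identity[OF Ck_SucD(1)[OF C] x]
    by (simp add: inner_commute)
  moreover have "v \<bullet> (?H *v x) = 0"
    using hess_matrix_mult_position[OF C x] v by (simp add: inner_commute)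
  moreover have "x \<bullet> (?H *v w) = 0"
    using position_mult_hess_matrix[OF C x] w by (simp flip: dot_lmul_matrix)
  moreover have "(\<alpha> *\<^sub>R x + \<beta> *\<^sub>R v) \<bullet> (hess_matrix F (c *\<^sub>R x) *v (\<gamma> *\<^sub>R x + \<delta> *\<^sub>R w))
      = c powr (e - 2) * (\<alpha> * \<gamma> * (x \<bullet> (?H *v x)) + \<alpha> * \<delta> * (x \<bullet> (?H *v w))
          + \<beta> * \<gamma> * (v \<bullet> (?H *v x)) + \<beta> * \<delta> * (v \<bullet> (?H *v w)))"
    by (simp add: hess_matrix_homogeneous[OF C x \<open>c > 0\<close>] scaleR_matrix_vector_assoc[symmetric]
        matrix_vector_right_distrib matrix_vector_mult_scaleR inner_add_left inner_add_right
        algebra_simps)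
  ultimately show ?thesis by simp
qed

lemma hess_metric_radial_split:
  assumes C: "Ck (Suc (Suc k)) U F" and "e \<noteq> 0" "e \<noteq> 1" and x: "x \<in> U" "F x = 1" and "c > 0"
    and "v \<in> level_tangent F x" "w \<in> level_tangent F x"
  shows "hess_metric e F (c *\<^sub>R x) (\<alpha> *\<^sub>R x + \<beta> *\<^sub>R v) (\<gamma> *\<^sub>R x + \<delta> *\<^sub>R w)
       = c powr (e - 2) * (- (\<alpha> * \<gamma>) + \<beta> * \<delta> * hess_metric e F x v w)"
proof -
  have "grad F x \<bullet> v = 0" "grad F x \<bullet> w = 0"
    using assms by (simp_all add: level_tangent_iff)
  then have form: "(\<alpha> *\<^sub>R x + \<beta> *\<^sub>R v) \<bullet> (hess_matrix F (c *\<^sub>R x) *v (\<gamma> *\<^sub>R x + \<delta> *\<^sub>R w))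
      = c powr (e - 2) * (\<alpha> * \<gamma> * (e * (e - 1)) + \<beta> * \<delta> * (v \<bullet> (hess_matrix F x *v w)))"
    using hess_form_radial_split[OF C x(1) \<open>c > 0\<close>] x(2) by simp
  have "e * (e - 1) \<noteq> 0" using assms(2,3) by simp
  then show ?thesis
    unfolding hess_metric_eq_inner form by (simp add: field_simps)
qed

lemma level_tangent_nondegenerate:
  assumes C: "Ck (Suc (Suc k)) U F" and "e \<noteq> 0" "e \<noteq> 1" and x: "x \<in> U" "F x = 1"
    and "det (hess_matrix F x) \<noteq> 0" and "v \<in> level_tangent F x"
    and orth: "\<forall>w\<in>level_tangent F x. hess_metric e F x v w = 0"
  shows "v = 0"
proof (rule nondegenerate_on_hyperplane)
  show "hess_matrix F x *v x = (e - 1) *\<^sub>R grad F x"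
    by (rule hess_matrix_mult_position[OF C x(1)])
  show "grad F x \<bullet> x \<noteq> 0"
    using euler_identity[OF Ck_SucD(1)[OF C] x(1)] assms by simp
  show "v \<bullet> (hess_matrix F x *v w) = 0" if "grad F x \<bullet> w = 0" for w
    using orth that assms by (simp add: level_tangent_iff hess_metric_eq_inner)
qed (use assms in \<open>simp_all add: level_tangent_iff\<close>)

lemma hess_metric_pullback_warp:
  assumes C: "Ck (Suc (Suc k)) U F" and "e \<noteq> 0" "e \<noteq> 1" and x: "x \<in> U" "F x = 1" and "t > 0"
    and "v \<in> level_tangent F x" "w \<in> level_tangent F x"
  shows "hess_metric e F (t powr (2/e) *\<^sub>R x)
           ((a * (2/e * t powr (2/e - 1))) *\<^sub>R x + t powr (2/e) *\<^sub>R v)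
           ((b * (2/e * t powr (2/e - 1))) *\<^sub>R x + t powr (2/e) *\<^sub>R w)
         = - (4 / e\<^sup>2) * a * b + t\<^sup>2 * hess_metric e F x v w"
proof -
  let ?l = "t powr (2/e)" and ?c = "2/e * t powr (2/e - 1)"
  have "hess_metric e F (?l *\<^sub>R x) ((a * ?c) *\<^sub>R x + ?l *\<^sub>R v) ((b * ?c) *\<^sub>R x + ?l *\<^sub>R w)
      = ?l powr (e - 2) * (- (a * ?c * (b * ?c)) + ?l * ?l * hess_metric e F x v w)"
    using assms by (intro hess_metric_radial_split[OF C]) auto
  also have "\<dots> = - (?l powr (e - 2) * ?c\<^sup>2) * a * b
                  + (?l powr (e - 2) * ?l\<^sup>2) * hess_metric e F x v w"
    by (simp add: algebra_simps power2_eq_square)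
  finally show ?thesis
    using warp_powr_identities[OF \<open>t > 0\<close> \<open>e \<noteq> 0\<close>] by simp
qed

lemma level_polar_warp:
  assumes "e \<noteq> 0" and x: "x \<in> U" "F x = 1" and "t > 0"
  shows "level_polar F e (t powr (2/e) *\<^sub>R x) = (t, x)"
proof -
  have F: "F (t powr (2/e) *\<^sub>R x) = t powr 2"
    using assms by (simp add: homogeneous powr_powr)
  have "(t powr 2) powr (1/2) = t"
    using \<open>t > 0\<close> by (simp add: powr_powr)
  moreover have "(t powr 2) powr (-1/e) * t powr (2/e) = t powr (2 * (-1/e) + 2/e)"
    by (simp only: powr_powr powr_add)
  then have "(t powr 2) powr (-1/e) * t powr (2/e) = 1"
    using \<open>t > 0\<close> by simp
  ultimately show ?thesis
    by (simp only: level_polar_def F scaleR_scaleR scaleR_one)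
qed

lemma level_polar_mem:
  assumes "e \<noteq> 0" and y: "y \<in> U" "F y > 0"
  shows "level_polar F e y \<in> {0<..} \<times> {x \<in> U. F x = 1}"
proof -
  have "F (F y powr (-1/e) *\<^sub>R y) = F y powr (-1/e * e) * F y"
    using y by (simp add: homogeneous powr_powr)
  also have "\<dots> = 1"
    using assms by (simp add: powr_minus field_simps)
  finally show ?thesis
    using y by (simp add: level_polar_def cone_U)
qed

lemma bij_betw_warp:
  assumes "e \<noteq> 0" and pos: "\<And>y. y \<in> U \<Longrightarrow> F y > 0"
  shows "bij_betw (\<lambda>p. fst p powr (2/e) *\<^sub>R snd p) ({0<..} \<times> {x \<in> U. F x = 1}) U"
proof (rule bij_betw_byWitness[where f' = "level_polar F e"])
  show "\<forall>p\<in>{0<..} \<times> {x \<in> U. F x = 1}. level_polar F e (fst p powr (2/e) *\<^sub>R snd p) = p"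
    using level_polar_warp[OF \<open>e \<noteq> 0\<close>] by auto
  show "\<forall>y\<in>U. fst (level_polar F e y) powr (2/e) *\<^sub>R snd (level_polar F e y) = y"
    using warp_level_polar pos by blast
  show "(\<lambda>p. fst p powr (2/e) *\<^sub>R snd p) ` ({0<..} \<times> {x \<in> U. F x = 1}) \<subseteq> U"
    using cone_U by auto
  show "level_polar F e ` U \<subseteq> {0<..} \<times> {x \<in> U. F x = 1}"
    using level_polar_mem[OF \<open>e \<noteq> 0\<close>] pos by blast
qed

end

theorem lemma2p1:
  fixes U :: "(real^'n) set" and f :: "real^'n \<Rightarrow> real" and d :: real
  assumes n2: "CARD('n) \<ge> 2"
    and openU: "open U"
    and cone: "\<And>x c. x \<in> U \<Longrightarrow> c > 0 \<Longrightarrow> c *\<^sub>R x \<in> U"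
    and smooth: "smooth_real_on U f"
    and d1: "d > 1"
    and homog: "\<And>x c. x \<in> U \<Longrightarrow> c > 0 \<Longrightarrow> f (c *\<^sub>R x) = c powr d * f x"
    and pos: "\<And>x. x \<in> U \<Longrightarrow> f x > 0"
    and nondeg: "\<And>x. x \<in> U \<Longrightarrow> det (\<chi> i j. hess f x i j) \<noteq> 0"
  shows
    "let M = {x \<in> U. f x = 1};
         g = hess_metric d f;
         \<phi> = (\<lambda>p::real \<times> (real^'n). fst p powr (2 / d) *\<^sub>R snd p)
     in
       \<comment> \<open>the restricted metric on M is nondegenerate\<close>
       (\<forall>x\<in>M. \<forall>v\<in>level_tangent f x.
          (\<forall>w\<in>level_tangent f x. g x v w = 0) \<longrightarrow> v = 0)
       \<comment> \<open>phi is a diffeomorphism from R>0 x M onto U\<close>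
     \<and> bij_betw \<phi> ({0<..} \<times> M) U
     \<and> smooth_map_on ({0<..} \<times> UNIV) \<phi>
     \<and> (\<exists>\<psi>. smooth_map_on U \<psi> \<and>
           (\<forall>y\<in>U. \<psi> y \<in> {0<..} \<times> M \<and> \<phi> (\<psi> y) = y))
       \<comment> \<open>phi pulls the metric g back to the warped product metric
           (4/d^2)((-1) R>0 x_t (d^2/4) M), i.e. -(4/d^2) a b + t^2 g_M(v,w)\<close>
     \<and> (\<forall>t>0. \<forall>x\<in>M. \<exists>\<phi>'. (\<phi> has_derivative \<phi>') (at (t, x)) \<and>
           (\<forall>a b. \<forall>v\<in>level_tangent f x. \<forall>w\<in>level_tangent f x.
              g (\<phi> (t, x)) (\<phi>' (a, v)) (\<phi>' (b, w))
                = - (4 / d\<^sup>2) * a * b + t\<^sup>2 * g x v w))"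
proof -
  interpret homogeneous_on_cone U f d
    using openU cone homog by unfold_locales
  have C2: "Ck (Suc (Suc 0)) U f"
    using smooth by (simp add: smooth_real_on_def)
  have d: "d \<noteq> 0" "d \<noteq> 1"
    using d1 by auto
  have nondegenerate: "\<forall>x\<in>{x \<in> U. f x = 1}. \<forall>v\<in>level_tangent f x.
      (\<forall>w\<in>level_tangent f x. hess_metric d f x v w = 0) \<longrightarrow> v = 0"
    using level_tangent_nondegenerate[OF C2 d] nondeg by (auto simp: hess_matrix_def)
  have inverse: "\<forall>y\<in>U. level_polar f d y \<in> {0<..} \<times> {x \<in> U. f x = 1} \<and>
      fst (level_polar f d y) powr (2/d) *\<^sub>R snd (level_polar f d y) = y"
    using level_polar_mem[OF d(1)] warp_level_polar pos by blast
  have pullback: "\<exists>\<phi>'. ((\<lambda>p. fst p powr (2/d) *\<^sub>R snd p) has_derivative \<phi>') (at (t, x)) \<and>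
      (\<forall>a b. \<forall>v\<in>level_tangent f x. \<forall>w\<in>level_tangent f x.
         hess_metric d f (t powr (2/d) *\<^sub>R x) (\<phi>' (a, v)) (\<phi>' (b, w))
           = - (4 / d\<^sup>2) * a * b + t\<^sup>2 * hess_metric d f x v w)"
    if "t > 0" "x \<in> U" "f x = 1" for t x
    using has_derivative_warp[OF \<open>t > 0\<close>, of "2/d" x] hess_metric_pullback_warp[OF C2 d that(2,3,1)]
    by (intro exI[of _ "\<lambda>q. (fst q * (2/d * t powr (2/d - 1))) *\<^sub>R x + t powr (2/d) *\<^sub>R snd q"]) auto
  show ?thesis
    unfolding Let_def
    using nondegenerate bij_betw_warp[OF d(1) pos] smooth_map_on_warp
      smooth_map_on_level_polar[OF openU smooth pos] inverse pullback
    by (intro conjI exI[of _ "level_polar f d"]) auto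
qed

end
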